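(* Let $\kappa:=\frac12\operatorname{arccosh}(3/2)$ and for real $u>\kappa$ put \begin{equation*} \ell(u) := \frac{1}{2}(e^{4u}-e^{2u}-2-e^{-2u}+e^{-4u}) + \frac{e^{2u}-e^{-2u}}{2}\sqrt{(e^{2u}+e^{-2u}+1)(e^{2u}+e^{-2u}-3)}, \end{equation*} where $\sqrt{\cdot}$ is the nonnegative square root. If $u>\kappa$, then $\ell(u)$ is a real number with $\ell(u)>1$. *)

theory Defs
  imports Complex_Main
begin

definition kappa :: real where
  "kappa = arcosh (3/2) / 2"

definition ell :: "real \<Rightarrow> real" where
  "ell u = (exp (4*u) - exp (2*u) - 2 - exp (-2*u) + exp (-4*u)) / 2
     + (exp (2*u) - exp (-2*u)) / 2
       * sqrt ((exp (2*u) + exp (-2*u) + 1) * (exp (2*u) + exp (-2*u) - 3))"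

end

theory Submission
  imports Defs
begin

text \<open>With \<open>c = cosh (2 u)\<close> one has \<open>\<ell>(u) = 2c\<^sup>2 - c - 2 + sinh (2u) \<surd>((2c+1)(2c-3))\<close>.
  The hypothesis \<open>u > \<kappa>\<close> says exactly \<open>c > 3/2\<close>, so the radicand is nonnegative, the
  square-root term is nonnegative because \<open>u > 0\<close>, and
  \<open>2c\<^sup>2 - c - 3 = (2c - 3)(c + 1) > 0\<close>.\<close>

lemma kappa_nonneg: "0 \<le> kappa"
  by (simp add: kappa_def)

lemma cosh_double_gt_three_halves:
  assumes "kappa < u"
  shows "3/2 < cosh (2 * u)"
proof -
  have "arcosh (3/2) < 2 * u"
    using assms by (simp add: kappa_def)
  then have "cosh (arcosh (3/2 :: real)) < cosh (2 * u)"
    by (intro cosh_real_strict_mono) auto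
  then show ?thesis
    by simp
qed

lemma exp_add_exp_uminus: "exp x + exp (- x) = 2 * cosh (x :: real)"
  by (simp add: cosh_field_def)

lemma exp_diff_exp_uminus: "exp x - exp (- x) = 2 * sinh (x :: real)"
  by (simp add: sinh_field_def)

lemma ell_eq_cosh_sinh:
  "ell u = 2 * cosh (2 * u) ^ 2 - cosh (2 * u) - 2
     + sinh (2 * u) * sqrt ((2 * cosh (2 * u) + 1) * (2 * cosh (2 * u) - 3))"
proof -
  have "exp (4 * u) + exp (- 4 * u) = 2 * cosh (2 * (2 * u))"
    using exp_add_exp_uminus[of "4 * u"] by simp
  also have "\<dots> = 4 * cosh (2 * u) ^ 2 - 2"
    using cosh_double_cosh[of "2 * u"] by simp
  finally have exp4: "exp (4 * u) + exp (- 4 * u) = 4 * cosh (2 * u) ^ 2 - 2" .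
  have exp2_add: "exp (2 * u) + exp (- 2 * u) = 2 * cosh (2 * u)"
    using exp_add_exp_uminus[of "2 * u"] by simp
  have exp2_diff: "exp (2 * u) - exp (- 2 * u) = 2 * sinh (2 * u)"
    using exp_diff_exp_uminus[of "2 * u"] by simp
  have "ell u = ((exp (4 * u) + exp (- 4 * u)) - (exp (2 * u) + exp (- 2 * u)) - 2) / 2
      + (exp (2 * u) - exp (- 2 * u)) / 2
        * sqrt ((exp (2 * u) + exp (- 2 * u) + 1) * (exp (2 * u) + exp (- 2 * u) - 3))"
    unfolding ell_def by (simp add: field_simps)
  also have "\<dots> = ((4 * cosh (2 * u) ^ 2 - 2) - 2 * cosh (2 * u) - 2) / 2
      + 2 * sinh (2 * u) / 2 * sqrt ((2 * cosh (2 * u) + 1) * (2 * cosh (2 * u) - 3))"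
    by (simp only: exp4 exp2_add exp2_diff)
  finally show ?thesis
    by simp
qed

theorem lemma4p4:
  fixes u :: real
  assumes "u > kappa"
  shows "(exp (2*u) + exp (-2*u) + 1) * (exp (2*u) + exp (-2*u) - 3) \<ge> 0 \<and> ell u > 1"
proof -
  define c where "c = cosh (2 * u)"
  have c: "3/2 < c"
    unfolding c_def using assms by (rule cosh_double_gt_three_halves)
  have radicand: "0 \<le> (2 * c + 1) * (2 * c - 3)"
    using c by simp
  have "0 \<le> sinh (2 * u)"
    using assms kappa_nonneg by simp
  then have sqrt_term: "0 \<le> sinh (2 * u) * sqrt ((2 * c + 1) * (2 * c - 3))"
    using radicand by simp
  have "2 * c ^ 2 - c - 3 = (2 * c - 3) * (c + 1)"
    by (simp add: power2_eq_square algebra_simps)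
  moreover have "0 < (2 * c - 3) * (c + 1)"
    using c by simp
  ultimately have "1 < 2 * c ^ 2 - c - 2"
    by linarith
  then have "1 < ell u"
    using sqrt_term by (simp add: ell_eq_cosh_sinh c_def)
  moreover have "exp (2 * u) + exp (- 2 * u) = 2 * c"
    using exp_add_exp_uminus[of "2 * u"] by (simp add: c_def)
  ultimately show ?thesis
    using radicand by simp
qed

end
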